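(* Assume the standing assumptions and Assumption (T). Let $\bar u\in V$, $\epsilon>0$, and let $u_\epsilon\in V$ satisfy \[ \alpha\langle u_\epsilon,v\rangle_V+\beta G_\epsilon'(u_\epsilon)v+\langle u_\epsilon-\bar u,v\rangle_{L^2(\Omega)}=-F'(u_\epsilon)v\qquad\forall v\in V, \] where $F'(u_\epsilon)$ is represented by a function in $L^1(\Omega)$, i.e. $F'(u_\epsilon)v=\int_\Omega F'(u_\epsilon)\,v\,dx$ for $v\in V\cap L^\infty(\Omega)$. Let $\lambda_\epsilon:=2u_\epsilon\psi_\epsilon'(u_\epsilon^2)$ (the function representing $G_\epsilon'(u_\epsilon)$). Then \[ \beta\|\lambda_\epsilon\|_{L^1(\Omega)}\le\|F'(u_\epsilon)\|_{L^1(\Omega)}+\|\bar u\|_{L^1(\Omega)} . \]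
   Context: Standing assumptions: $\Omega\subset\mathbb R^d$ bounded Lipschitz domain; $V$ real Hilbert space with inner product $\langle\cdot,\cdot\rangle_V$, $V\subset L^2(\Omega)$ with compact and dense embedding; $F:V\to\mathbb R$ weakly lower semicontinuous, bounded below by an affine function, continuously Fréchet differentiable. $\alpha>0$, $\beta>0$, $p\in(0,1)$. For $\epsilon>0$, $\psi_\epsilon(t)=\frac p2\frac{t}{\epsilon^{2-p}}+(1-\frac p2)\epsilon^p$ if $t\in[0,\epsilon^2)$ and $\psi_\epsilon(t)=t^{p/2}$ if $t\ge\epsilon^2$, $\psi_\epsilon'(t)=\frac p2\min(\epsilon^{p-2},t^{(p-2)/2})$; $G_\epsilon(u)=\int_\Omega\psi_\epsilon(|u|^2)dx$, $G_\epsilon'(u)v=\int_\Omega 2u\psi_\epsilon'(u^2)v\,dx$. Assumption (T): (i) for every $u\in V$ the function $v:=\max(-1,\min(u,1))$ belongs to $V$ and satisfies $\langle u,v\rangle_V\ge\|v\|_V^2$; (ii) $C_0(\Omega)\cap V$ is dense in $V$ and in $C_0(\Omega)$ with respect to their norms. *)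

theory Defs
  imports "HOL-Analysis.Analysis"
begin

text \<open>Bounded Lipschitz domain (coordinate-free form): nonempty, open, bounded, connected, and
  near every boundary point x it is, inside a ball around x, exactly the region strictly below
  the graph of a Lipschitz function gamma defined on the hyperplane orthogonal to a unit
  direction e (this is the usual definition up to a rigid change of coordinates).\<close>
definition lipschitz_domain :: "'x::euclidean_space set \<Rightarrow> bool" where
  "lipschitz_domain \<Omega> \<longleftrightarrow> open \<Omega> \<and> bounded \<Omega> \<and> connected \<Omega> \<and> \<Omega> \<noteq> {} \<and>
     (\<forall>x\<in>frontier \<Omega>. \<exists>r>0. \<exists>e::'x. \<exists>\<gamma>::'x \<Rightarrow> real. \<exists>L.
        norm e = 1 \<and> L-lipschitz_on {z. z \<bullet> e = 0} \<gamma> \<and>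
        \<Omega> \<inter> ball x r = {y \<in> ball x r. y \<bullet> e < \<gamma> (y - (y \<bullet> e) *\<^sub>R e)})"

definition L2_on :: "'x::euclidean_space set \<Rightarrow> ('x \<Rightarrow> real) \<Rightarrow> bool" where
  "L2_on \<Omega> f \<longleftrightarrow> f \<in> borel_measurable (lebesgue_on \<Omega>) \<and>
                   integrable (lebesgue_on \<Omega>) (\<lambda>x. (f x)\<^sup>2)"

definition L2_norm_sq :: "'x::euclidean_space set \<Rightarrow> ('x \<Rightarrow> real) \<Rightarrow> real" where
  "L2_norm_sq \<Omega> f = (LINT x|lebesgue_on \<Omega>. (f x)\<^sup>2)"

text \<open>The Hilbert space V is an abstract real Hilbert space of type 'v (inner product = inner),
  together with the embedding iota: V -> L2(Omega), given on representatives.  The embedding is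
  linear (a.e.), injective (as a map into L2, i.e. modulo null sets), continuous, compact and
  has dense range.\<close>
definition V_embedding ::
    "'x::euclidean_space set \<Rightarrow> ('v::{real_inner,complete_space} \<Rightarrow> 'x \<Rightarrow> real) \<Rightarrow> bool" where
  "V_embedding \<Omega> \<iota> \<longleftrightarrow>
     (\<forall>u. L2_on \<Omega> (\<iota> u)) \<and>
     (\<forall>u w. AE x in lebesgue_on \<Omega>. \<iota> (u + w) x = \<iota> u x + \<iota> w x) \<and>
     (\<forall>a u. AE x in lebesgue_on \<Omega>. \<iota> (a *\<^sub>R u) x = a * \<iota> u x) \<and>
     (\<forall>u. (AE x in lebesgue_on \<Omega>. \<iota> u x = 0) \<longrightarrow> u = 0) \<and>
     (\<exists>C. \<forall>u. L2_norm_sq \<Omega> (\<iota> u) \<le> C * (norm u)\<^sup>2) \<and>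
     (\<forall>s::nat \<Rightarrow> 'v. bounded (range s) \<longrightarrow>
        (\<exists>r f. strict_mono r \<and> L2_on \<Omega> f \<and>
               (\<lambda>n. L2_norm_sq \<Omega> (\<lambda>x. \<iota> (s (r n)) x - f x)) \<longlonglongrightarrow> 0)) \<and>
     (\<forall>f. L2_on \<Omega> f \<longrightarrow> (\<forall>e>0. \<exists>v. L2_norm_sq \<Omega> (\<lambda>x. \<iota> v x - f x) < e))"

definition weakly_lsc :: "('v::real_inner \<Rightarrow> real) \<Rightarrow> bool" where
  "weakly_lsc F \<longleftrightarrow>
     (\<forall>s u. (\<forall>w. (\<lambda>n. inner (s n) w) \<longlonglongrightarrow> inner u w) \<longrightarrow>
            ereal (F u) \<le> liminf (\<lambda>n. ereal (F (s n))))"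

definition bounded_below_affine :: "('v::real_inner \<Rightarrow> real) \<Rightarrow> bool" where
  "bounded_below_affine F \<longleftrightarrow> (\<exists>w c. \<forall>u. inner w u + c \<le> F u)"

definition C1_with_deriv :: "('v::real_normed_vector \<Rightarrow> real) \<Rightarrow> ('v \<Rightarrow> 'v \<Rightarrow>\<^sub>L real) \<Rightarrow> bool" where
  "C1_with_deriv F DF \<longleftrightarrow> (\<forall>u. (F has_derivative blinfun_apply (DF u)) (at u)) \<and> continuous_on UNIV DF"

definition C0_on :: "'x::euclidean_space set \<Rightarrow> ('x \<Rightarrow> real) set" where
  "C0_on \<Omega> = {f. continuous_on (closure \<Omega>) f \<and> (\<forall>x\<in>frontier \<Omega>. f x = 0)}"

definition assumption_T ::
    "'x::euclidean_space set \<Rightarrow> ('v::{real_inner,complete_space} \<Rightarrow> 'x \<Rightarrow> real) \<Rightarrow> bool" where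
  "assumption_T \<Omega> \<iota> \<longleftrightarrow>
     (\<forall>u. \<exists>v. (AE x in lebesgue_on \<Omega>. \<iota> v x = max (-1) (min (\<iota> u x) 1)) \<and>
              (norm v)\<^sup>2 \<le> inner u v) \<and>
     (\<forall>u. \<forall>e>0. \<exists>v g. g \<in> C0_on \<Omega> \<and> (AE x in lebesgue_on \<Omega>. \<iota> v x = g x) \<and>
                      norm (u - v) < e) \<and>
     (\<forall>f\<in>C0_on \<Omega>. \<forall>e>0. \<exists>v g. g \<in> C0_on \<Omega> \<and> (AE x in lebesgue_on \<Omega>. \<iota> v x = g x) \<and>
                      (\<forall>x\<in>closure \<Omega>. \<bar>f x - g x\<bar> \<le> e))"

definition psi_eps :: "real \<Rightarrow> real \<Rightarrow> real \<Rightarrow> real" where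
  "psi_eps p \<epsilon> t = (if t < \<epsilon>\<^sup>2 then p / 2 * t / \<epsilon> powr (2 - p) + (1 - p / 2) * \<epsilon> powr p
                     else t powr (p / 2))"

text \<open>psi_eps' (t) = p/2 * min(eps^(p-2), t^((p-2)/2)); written piecewise so that the value
  at t = 0 is the intended eps^(p-2) (note 0 powr negative = 0 in Isabelle).\<close>
definition dpsi_eps :: "real \<Rightarrow> real \<Rightarrow> real \<Rightarrow> real" where
  "dpsi_eps p \<epsilon> t = (if t < \<epsilon>\<^sup>2 then p / 2 * \<epsilon> powr (p - 2) else p / 2 * t powr ((p - 2) / 2))"

definition G_eps :: "'x::euclidean_space set \<Rightarrow> real \<Rightarrow> real \<Rightarrow> ('x \<Rightarrow> real) \<Rightarrow> real" where
  "G_eps \<Omega> p \<epsilon> u = (LINT x|lebesgue_on \<Omega>. psi_eps p \<epsilon> ((u x)\<^sup>2))"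

definition lambda_eps :: "real \<Rightarrow> real \<Rightarrow> ('x \<Rightarrow> real) \<Rightarrow> 'x \<Rightarrow> real" where
  "lambda_eps p \<epsilon> u x = 2 * u x * dpsi_eps p \<epsilon> ((u x)\<^sup>2)"

definition dG_eps :: "'x::euclidean_space set \<Rightarrow> real \<Rightarrow> real \<Rightarrow> ('x \<Rightarrow> real) \<Rightarrow> ('x \<Rightarrow> real) \<Rightarrow> real" where
  "dG_eps \<Omega> p \<epsilon> u v = (LINT x|lebesgue_on \<Omega>. lambda_eps p \<epsilon> u x * v x)"

end

theory Submission
  imports Defs
begin

(* Test the optimality system with the truncations v_n of n u_eps to [-1, 1] supplied by
   Assumption (T). They are bounded by 1 and have the sign of u_eps, so <u_eps, v_n>_V >= 0 and
   (u_eps - ubar) v_n >= - ubar v_n; hence every term except the penalty term is controlled by the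
   L1 norms of F'(u_eps) and ubar. Since lambda_eps has the sign of u_eps, lambda_eps v_n tends to
   |lambda_eps| pointwise, and dominated convergence gives the bound. *)

lemma dpsi_eps_pos:
  assumes "0 < p" "0 < \<epsilon>"
  shows "0 < dpsi_eps p \<epsilon> t"
proof (cases "t < \<epsilon>\<^sup>2")
  case False
  with assms have "0 < t" by (smt (verit) zero_less_power)
  with assms show ?thesis by (simp add: dpsi_eps_def)
qed (use assms in \<open>simp add: dpsi_eps_def\<close>)

lemma dpsi_eps_le:
  assumes "0 \<le> p" "p \<le> 2" "0 < \<epsilon>"
  shows "dpsi_eps p \<epsilon> t \<le> p / 2 * \<epsilon> powr (p - 2)"
proof (cases "t < \<epsilon>\<^sup>2")
  case False
  then have "t powr ((p - 2) / 2) \<le> (\<epsilon>\<^sup>2) powr ((p - 2) / 2)"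
    using assms by (intro powr_mono2') auto
  also have "\<dots> = \<epsilon> powr (p - 2)"
  proof -
    have "(\<epsilon>\<^sup>2) powr ((p - 2) / 2) = \<epsilon> powr (2 * ((p - 2) / 2))"
      using assms by (simp add: powr_powr flip: powr_numeral)
    also have "2 * ((p - 2) / 2) = p - 2" by simp
    finally show ?thesis .
  qed
  finally show ?thesis
    using False assms by (simp add: dpsi_eps_def mult_left_mono)
qed (simp add: dpsi_eps_def)

lemma sgn_lambda_eps:
  assumes "0 < p" "0 < \<epsilon>"
  shows "sgn (lambda_eps p \<epsilon> u x) = sgn (u x)"
  using dpsi_eps_pos[OF assms] by (simp add: lambda_eps_def sgn_mult)

lemma integrable_lambda_eps:
  fixes u :: "'a \<Rightarrow> real"
  assumes "0 \<le> p" "p \<le> 2" "0 < \<epsilon>" and u: "integrable M u"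
  shows "integrable M (lambda_eps p \<epsilon> u)"
proof (rule Bochner_Integration.integrable_bound)
  have [measurable]: "u \<in> borel_measurable M" using u by simp
  show "integrable M (\<lambda>x. p * \<epsilon> powr (p - 2) * u x)" using u by simp
  show "lambda_eps p \<epsilon> u \<in> borel_measurable M"
    unfolding lambda_eps_def dpsi_eps_def by measurable
  show "AE x in M. norm (lambda_eps p \<epsilon> u x) \<le> norm (p * \<epsilon> powr (p - 2) * u x)"
  proof (intro AE_I2)
    fix x
    have "0 \<le> dpsi_eps p \<epsilon> ((u x)\<^sup>2)"
      using assms by (simp add: dpsi_eps_def)
    then have "\<bar>lambda_eps p \<epsilon> u x\<bar> = 2 * \<bar>u x\<bar> * dpsi_eps p \<epsilon> ((u x)\<^sup>2)"
      by (simp add: lambda_eps_def abs_mult)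
    also have "\<dots> \<le> 2 * \<bar>u x\<bar> * (p / 2 * \<epsilon> powr (p - 2))"
      using dpsi_eps_le[OF assms(1-3)] by (intro mult_left_mono) simp_all
    finally show "norm (lambda_eps p \<epsilon> u x) \<le> norm (p * \<epsilon> powr (p - 2) * u x)"
      using assms by (simp add: abs_mult mult.commute)
  qed
qed

lemma clip_scaled_tendsto_sgn:
  "(\<lambda>n. max (-1) (min (real n * a) 1)) \<longlonglongrightarrow> sgn (a::real)"
proof (cases "a = 0")
  case False
  then obtain N where N: "1 \<le> real N * \<bar>a\<bar>"
    using ex_less_of_nat_mult[of "\<bar>a\<bar>" 1] by (auto intro: less_imp_le)
  have "max (-1) (min (real n * a) 1) = sgn a" if "N \<le> n" for n
  proof -
    have "1 \<le> real n * \<bar>a\<bar>"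
      using N that by (meson abs_ge_zero mult_right_mono of_nat_le_iff order_trans)
    then show ?thesis
    proof (cases "0 < a")
      case False
      with \<open>a \<noteq> 0\<close> have "a < 0" by simp
      with \<open>1 \<le> real n * \<bar>a\<bar>\<close> have "real n * a \<le> -1" by simp
      with \<open>a < 0\<close> show ?thesis by simp
    qed simp
  qed
  then show ?thesis by (intro tendsto_eventually) (auto simp: eventually_sequentially)
qed simp

lemma clip_scaled_same_sign:
  assumes "0 \<le> (k::real)"
  shows "0 \<le> a * max (-1) (min (k * a) 1)"
proof (cases "0 \<le> a")
  case True
  with assms have "0 \<le> k * a" by simp
  with True show ?thesis by (intro mult_nonneg_nonneg) auto
next
  case False
  with assms have "k * a \<le> 0" by (simp add: mult_nonneg_nonpos)
  with False show ?thesis by (intro mult_nonpos_nonpos) auto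
qed

lemma integrable_mult_bounded:
  fixes f w :: "'a \<Rightarrow> real"
  assumes "integrable M f" "w \<in> borel_measurable M" "AE x in M. \<bar>w x\<bar> \<le> 1"
  shows "integrable M (\<lambda>x. f x * w x)"
  by (rule Bochner_Integration.integrable_bound[of _ "\<lambda>x. \<bar>f x\<bar>"])
     (use assms in \<open>auto elim!: eventually_mono simp: abs_mult intro: mult_left_le\<close>)

lemma abs_integral_mult_bounded_le:
  fixes f w :: "'a \<Rightarrow> real"
  assumes "integrable M f" "w \<in> borel_measurable M" "AE x in M. \<bar>w x\<bar> \<le> 1"
  shows "\<bar>\<integral>x. f x * w x \<partial>M\<bar> \<le> (\<integral>x. \<bar>f x\<bar> \<partial>M)"
proof -
  have "\<bar>\<integral>x. f x * w x \<partial>M\<bar> \<le> (\<integral>x. \<bar>f x * w x\<bar> \<partial>M)"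
    using integral_norm_bound[of M "\<lambda>x. f x * w x"] by simp
  also have "\<dots> \<le> (\<integral>x. \<bar>f x\<bar> \<partial>M)"
  proof (rule integral_mono_AE)
    show "AE x in M. \<bar>f x * w x\<bar> \<le> \<bar>f x\<bar>"
      using assms(3) by eventually_elim (simp add: abs_mult mult_left_le)
  qed (use assms integrable_mult_bounded[OF assms] in auto)
  finally show ?thesis .
qed

lemma tested_equation_bound:
  fixes u ubar g w :: "'a \<Rightarrow> real"
  assumes u: "integrable M u" and ubar: "integrable M ubar" and g: "integrable M g"
    and w: "w \<in> borel_measurable M" "AE x in M. \<bar>w x\<bar> \<le> 1"
    and same_sign: "AE x in M. 0 \<le> u x * w x"
    and "0 \<le> c"
    and tested: "c + b + (\<integral>x. (u x - ubar x) * w x \<partial>M) = - (\<integral>x. g x * w x \<partial>M)"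
  shows "b \<le> (\<integral>x. \<bar>g x\<bar> \<partial>M) + (\<integral>x. \<bar>ubar x\<bar> \<partial>M)"
proof -
  have "(\<integral>x. (u x - ubar x) * w x \<partial>M) = (\<integral>x. u x * w x \<partial>M) - (\<integral>x. ubar x * w x \<partial>M)"
    using integrable_mult_bounded[OF u w] integrable_mult_bounded[OF ubar w]
    by (simp add: left_diff_distrib)
  moreover have "0 \<le> (\<integral>x. u x * w x \<partial>M)"
    using same_sign by (rule integral_nonneg_AE)
  moreover have "- (\<integral>x. g x * w x \<partial>M) \<le> (\<integral>x. \<bar>g x\<bar> \<partial>M)"
    using abs_integral_mult_bounded_le[OF g w] by linarith
  moreover have "(\<integral>x. ubar x * w x \<partial>M) \<le> (\<integral>x. \<bar>ubar x\<bar> \<partial>M)"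
    using abs_integral_mult_bounded_le[OF ubar w] by linarith
  ultimately show ?thesis
    using tested \<open>0 \<le> c\<close> by linarith
qed

lemma integral_mult_tendsto_integral_abs:
  fixes l :: "'a \<Rightarrow> real" and w :: "nat \<Rightarrow> 'a \<Rightarrow> real"
  assumes l: "integrable M l"
    and w: "\<And>n. w n \<in> borel_measurable M" "\<And>n. AE x in M. \<bar>w n x\<bar> \<le> 1"
    and lim: "AE x in M. (\<lambda>n. w n x) \<longlonglongrightarrow> sgn (l x)"
  shows "(\<lambda>n. \<integral>x. l x * w n x \<partial>M) \<longlonglongrightarrow> (\<integral>x. \<bar>l x\<bar> \<partial>M)"
proof (rule integral_dominated_convergence[where w = "\<lambda>x. \<bar>l x\<bar>"])
  show "AE x in M. norm (l x * w n x) \<le> \<bar>l x\<bar>" for n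
    using w(2)[of n] by eventually_elim (simp add: abs_mult mult_left_le)
  show "AE x in M. (\<lambda>n. l x * w n x) \<longlonglongrightarrow> \<bar>l x\<bar>"
    using lim by eventually_elim (auto intro: tendsto_mult_left simp: abs_sgn)
qed (use l w(1) in auto)

lemma lipschitz_domain_lmeasurable: "lipschitz_domain \<Omega> \<Longrightarrow> \<Omega> \<in> lmeasurable"
  unfolding lipschitz_domain_def by (simp add: bounded_set_imp_lmeasurable borel_open)

lemma V_embedding_integrable:
  assumes "\<Omega> \<in> lmeasurable" "V_embedding \<Omega> \<iota>"
  shows "integrable (lebesgue_on \<Omega>) (\<iota> u)"
proof -
  interpret finite_measure "lebesgue_on \<Omega>"
    using assms(1) by (rule finite_measure_lebesgue_on)
  have "L2_on \<Omega> (\<iota> u)" using assms(2) by (simp add: V_embedding_def)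
  then show ?thesis
    unfolding L2_on_def by (blast intro: square_integrable_imp_integrable)
qed

lemma assumption_T_sign_approximation:
  fixes \<iota> :: "'v::{real_inner,complete_space} \<Rightarrow> 'x::euclidean_space \<Rightarrow> real"
  assumes emb: "V_embedding \<Omega> \<iota>" and T: "assumption_T \<Omega> \<iota>"
  obtains v :: "nat \<Rightarrow> 'v"
  where "\<And>n. AE x in lebesgue_on \<Omega>. \<bar>\<iota> (v n) x\<bar> \<le> 1"
    and "\<And>n. AE x in lebesgue_on \<Omega>. 0 \<le> \<iota> u x * \<iota> (v n) x"
    and "AE x in lebesgue_on \<Omega>. (\<lambda>n. \<iota> (v n) x) \<longlonglongrightarrow> sgn (\<iota> u x)"
    and "\<And>n. 0 \<le> inner u (v n)"
proof -
  (* Scaling by Suc n rather than n: a zero factor would lose the sign of <u, v>_V. *)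
  define clip where "clip n x = max (-1) (min (real (Suc n) * \<iota> u x) 1)" for n x
  have "\<exists>v. (AE x in lebesgue_on \<Omega>. \<iota> v x = clip n x) \<and> 0 \<le> inner u v" for n
  proof -
    obtain v where v_clip: "AE x in lebesgue_on \<Omega>.
          \<iota> v x = max (-1) (min (\<iota> (real (Suc n) *\<^sub>R u) x) 1)"
      and v_inner: "(norm v)\<^sup>2 \<le> inner (real (Suc n) *\<^sub>R u) v"
      using T[unfolded assumption_T_def, THEN conjunct1, rule_format, of "real (Suc n) *\<^sub>R u"]
      by blast
    have "AE x in lebesgue_on \<Omega>. \<iota> (real (Suc n) *\<^sub>R u) x = real (Suc n) * \<iota> u x"
      using emb[unfolded V_embedding_def, THEN conjunct2, THEN conjunct2, THEN conjunct1] by blast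
    with v_clip have "AE x in lebesgue_on \<Omega>. \<iota> v x = clip n x"
      by eventually_elim (simp add: clip_def)
    moreover have "0 \<le> real (Suc n) * inner u v"
      using v_inner by (metis inner_scaleR_left order_trans zero_le_power2)
    then have "0 \<le> inner u v" by (simp add: zero_le_mult_iff)
    ultimately show ?thesis by blast
  qed
  then obtain v where v_clip: "\<And>n. AE x in lebesgue_on \<Omega>. \<iota> (v n) x = clip n x"
    and "\<And>n. 0 \<le> inner u (v n)" by metis
  moreover have "AE x in lebesgue_on \<Omega>. \<bar>\<iota> (v n) x\<bar> \<le> 1" for n
    using v_clip[of n] by eventually_elim (auto simp: clip_def)
  moreover have "AE x in lebesgue_on \<Omega>. 0 \<le> \<iota> u x * \<iota> (v n) x" for n
    using v_clip[of n] by eventually_elim (simp add: clip_def clip_scaled_same_sign)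
  moreover have "AE x in lebesgue_on \<Omega>. (\<lambda>n. \<iota> (v n) x) \<longlonglongrightarrow> sgn (\<iota> u x)"
  proof -
    have "AE x in lebesgue_on \<Omega>. \<forall>n. \<iota> (v n) x = clip n x"
      using v_clip by (simp add: AE_all_countable)
    then show ?thesis
    proof eventually_elim
      case (elim x)
      have "(\<lambda>n. clip n x) \<longlonglongrightarrow> sgn (\<iota> u x)"
        unfolding clip_def using LIMSEQ_Suc[OF clip_scaled_tendsto_sgn] .
      with elim show ?case by simp
    qed
  qed
  ultimately show ?thesis using that by blast
qed

theorem lemma5p7:
  fixes \<Omega> :: "'x::euclidean_space set"
    and \<iota> :: "'v::{real_inner,complete_space} \<Rightarrow> 'x \<Rightarrow> real"
    and F :: "'v \<Rightarrow> real" and DF :: "'v \<Rightarrow> 'v \<Rightarrow>\<^sub>L real"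
    and \<alpha> \<beta> p \<epsilon> :: real and ubar u\<^sub>\<epsilon> :: 'v and g :: "'x \<Rightarrow> real"
  assumes dom: "lipschitz_domain \<Omega>"
    and emb: "V_embedding \<Omega> \<iota>"
    and F_wlsc: "weakly_lsc F"
    and F_below: "bounded_below_affine F"
    and F_C1: "C1_with_deriv F DF"
    and \<alpha>: "\<alpha> > 0" and \<beta>: "\<beta> > 0" and p: "0 < p" "p < 1"
    and T: "assumption_T \<Omega> \<iota>"
    and \<epsilon>: "\<epsilon> > 0"
    and eq: "\<forall>v. \<alpha> * inner u\<^sub>\<epsilon> v + \<beta> * dG_eps \<Omega> p \<epsilon> (\<iota> u\<^sub>\<epsilon>) (\<iota> v)
                 + (LINT x|lebesgue_on \<Omega>. (\<iota> u\<^sub>\<epsilon> x - \<iota> ubar x) * \<iota> v x)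
               = - blinfun_apply (DF u\<^sub>\<epsilon>) v"
    and g_int: "integrable (lebesgue_on \<Omega>) g"
    and g_rep: "\<forall>v. (\<exists>M. AE x in lebesgue_on \<Omega>. \<bar>\<iota> v x\<bar> \<le> M) \<longrightarrow>
                   blinfun_apply (DF u\<^sub>\<epsilon>) v = (LINT x|lebesgue_on \<Omega>. g x * \<iota> v x)"
  shows "\<beta> * (LINT x|lebesgue_on \<Omega>. \<bar>lambda_eps p \<epsilon> (\<iota> u\<^sub>\<epsilon>) x\<bar>)
           \<le> (LINT x|lebesgue_on \<Omega>. \<bar>g x\<bar>) + (LINT x|lebesgue_on \<Omega>. \<bar>\<iota> ubar x\<bar>)"
proof -
  let ?M = "lebesgue_on \<Omega>" and ?l = "lambda_eps p \<epsilon> (\<iota> u\<^sub>\<epsilon>)"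
  have integrable_\<iota>: "integrable ?M (\<iota> w)" for w
    using lipschitz_domain_lmeasurable[OF dom] emb by (rule V_embedding_integrable)
  then have measurable_\<iota>: "\<iota> w \<in> borel_measurable ?M" for w by simp
  obtain v where bounded: "\<And>n. AE x in ?M. \<bar>\<iota> (v n) x\<bar> \<le> 1"
    and same_sign: "\<And>n. AE x in ?M. 0 \<le> \<iota> u\<^sub>\<epsilon> x * \<iota> (v n) x"
    and to_sgn: "AE x in ?M. (\<lambda>n. \<iota> (v n) x) \<longlonglongrightarrow> sgn (\<iota> u\<^sub>\<epsilon> x)"
    and inner_nonneg: "\<And>n. 0 \<le> inner u\<^sub>\<epsilon> (v n)"
    using assumption_T_sign_approximation[OF emb T, of u\<^sub>\<epsilon>] by blast
  have tested: "\<beta> * (LINT x|?M. ?l x * \<iota> (v n) x)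
      \<le> (LINT x|?M. \<bar>g x\<bar>) + (LINT x|?M. \<bar>\<iota> ubar x\<bar>)" for n
  proof (rule tested_equation_bound[OF integrable_\<iota> integrable_\<iota> g_int measurable_\<iota> bounded same_sign])
    show "0 \<le> \<alpha> * inner u\<^sub>\<epsilon> (v n)" using \<alpha> inner_nonneg by simp
    show "\<alpha> * inner u\<^sub>\<epsilon> (v n) + \<beta> * (LINT x|?M. ?l x * \<iota> (v n) x)
        + (LINT x|?M. (\<iota> u\<^sub>\<epsilon> x - \<iota> ubar x) * \<iota> (v n) x) = - (LINT x|?M. g x * \<iota> (v n) x)"
      using eq[rule_format, of "v n"] g_rep[rule_format, of "v n"] bounded[of n]
      unfolding dG_eps_def by auto
  qed
  have limit: "(\<lambda>n. \<beta> * (LINT x|?M. ?l x * \<iota> (v n) x)) \<longlonglongrightarrow> \<beta> * (LINT x|?M. \<bar>?l x\<bar>)"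
    using integrable_lambda_eps[OF _ _ \<epsilon> integrable_\<iota>] measurable_\<iota> bounded to_sgn p
    by (intro tendsto_mult_left integral_mult_tendsto_integral_abs)
      (simp_all add: sgn_lambda_eps[OF _ \<epsilon>])
  show ?thesis
    by (rule LIMSEQ_le_const2[OF limit]) (use tested in blast)
qed

end
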